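(* Assume the standard setting described in the context with $R\equiv0$, and assume in addition that for every continuous $\phi:\mathbb{R}^{V_0}\to\mathbb{R}$ and every $\delta\in(0,\infty)$ one has $\mathbb{P}(\|f_{\mathbf M}-\phi\|_{\mathbb{P}_X}<\delta)>0$. Then for every non-empty open set $U\subseteq\mathcal{E}_P^{(0,0,1)}(\mathcal{X})$, \[ \mathbb{P}\bigl(\exists\,\theta\in U:\ \theta\text{ is a local minimum of }J_{\mathbf M}\bigr)>0. \]
   Context: Shallow network: finite pairwise disjoint $V_0,V_1,V_2$, activation $\psi$; $E=(V_0\times V_1)\cup(V_1\times V_2)$; $\Theta=\mathbb{R}^E\times\mathbb{R}^{V_1\cup V_2}$, $\theta=(w,\beta)$; response $(\Psi_\theta(x))_l=\beta_l+\sum_{j\in V_1}\psi(\beta_j+\sum_{i\in V_0}x_iw_{ij})w_{jl}$; $w_{j\bullet}=(w_{jl})_{l\in V_2}$. Standard setting: $\#V_2=1$, $\psi$ real-analytic; $\mathbb{P}_X$ on $\mathbb{R}^{V_0}$ with compact support $\mathcal{X}$; measurable space $\mathbb{M}$, kernel $K$ from $\mathbb{M}\times\mathbb{R}^{V_0}$ to $\mathbb{R}^{V_2}$; for $\mathbf m\in\mathbb{M}$, under $\mathbb{P}_{\mathbf m}$: $X\sim\mathbb{P}_X$, $\mathbb{P}_{\mathbf m}(Y\in B\mid X)=K(\mathbf m,X;B)$, $\mathbb{E}_{\mathbf m}[\|Y\|^2]<\infty$; target $f_{\mathbf m}(x)=\int y\,K(\mathbf m,x;dy)$; $\mathbf M$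 an $\mathbb{M}$-valued random variable such that for every continuous $\phi$, $\int\phi f_{\mathbf M}\,d\mathbb{P}_X$ is Gaussian with strictly positive variance whenever $\phi\not\equiv0$ on $\mathcal{X}$. Cost $J_{\mathbf m}(\theta)=\mathbb{E}_{\mathbf m}[(\Psi_\theta(X)-Y)^2]+R(\theta)$ with $R$ real-analytic convex (here $R\equiv0$). $\|g\|_{\mathbb{P}_X}=(\int g^2\,d\mathbb{P}_X)^{1/2}$. $\mathcal{E}_P^{(0,0,1)}(\mathcal{X})$: parameters with $w_{k\bullet}\not\equiv0$ for all $k\in V_1$ such that the only constants $P^{(\emptyset)}$, $P^{(0)}_j$ and affine polynomials $P^{(1)}_j$ ($j\in V_1$) on $\mathbb{R}^{V_0}$ with $P^{(\emptyset)}+\sum_{j\in V_1}\bigl(P_j^{(0)}\psi(\beta_j+\sum_ix_iw_{ij})+P_j^{(1)}(x)\psi'(\beta_j+\sum_ix_iw_{ij})\bigr)=0$ for all $x\in\mathcal{X}$ are zero. *)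

theory Defs
  imports "HOL-Probability.Probability"
begin

text \<open>Shallow network with #V2 = 1.  Input neurons V0 = finite type 'i, hidden neurons
V1 = finite type 'j, a single output neuron.  A parameter
theta = (w_in, b_hid, w_out, b_out) collects the weights w_ij (i in V0, j in V1),
the hidden biases beta_j, the output weights w_jl and the output bias beta_l.\<close>

type_synonym ('i, 'j) param = "(real^('i \<times> 'j)) \<times> (real^'j) \<times> (real^'j) \<times> real"

definition real_analytic :: "(real \<Rightarrow> real) \<Rightarrow> bool" where
  "real_analytic f \<longleftrightarrow>
     (\<forall>x. \<exists>r>0. \<exists>a::nat \<Rightarrow> real. \<forall>y. \<bar>y - x\<bar> < r \<longrightarrow> (\<lambda>n. a n * (y - x) ^ n) sums f y)"

definition preact :: "('i::finite, 'j::finite) param \<Rightarrow> real^'i \<Rightarrow> 'j \<Rightarrow> real" where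
  "preact \<theta> x j = (fst (snd \<theta>)) $ j + (\<Sum>i\<in>UNIV. x $ i * (fst \<theta>) $ (i, j))"

definition response :: "(real \<Rightarrow> real) \<Rightarrow> ('i::finite, 'j::finite) param \<Rightarrow> real^'i \<Rightarrow> real" where
  "response \<psi> \<theta> x = snd (snd (snd \<theta>)) +
     (\<Sum>j\<in>UNIV. \<psi> (preact \<theta> x j) * (fst (snd (snd \<theta>))) $ j)"

definition msupport :: "'a::metric_space measure \<Rightarrow> 'a set" where
  "msupport M = {x. \<forall>e>0. emeasure M (ball x e) \<noteq> 0}"

definition EP001 :: "(real \<Rightarrow> real) \<Rightarrow> (real^'i) set \<Rightarrow> ('i::finite, 'j::finite) param set" where
  "EP001 \<psi> X = {\<theta>. (\<forall>k. (fst (snd (snd \<theta>))) $ k \<noteq> 0) \<and>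
      (\<forall>(c::real) (p0::'j \<Rightarrow> real) (c1::'j \<Rightarrow> real) (a1::'j \<Rightarrow> 'i \<Rightarrow> real).
         (\<forall>x\<in>X. c + (\<Sum>j\<in>UNIV. p0 j * \<psi> (preact \<theta> x j)
                    + (c1 j + (\<Sum>i\<in>UNIV. a1 j i * x $ i)) * deriv \<psi> (preact \<theta> x j)) = 0)
         \<longrightarrow> c = 0 \<and> (\<forall>j. p0 j = 0) \<and> (\<forall>j. c1 j = 0) \<and> (\<forall>j i. a1 j i = 0))}"

definition target :: "('m \<Rightarrow> real^'i \<Rightarrow> real measure) \<Rightarrow> 'm \<Rightarrow> real^'i \<Rightarrow> real" where
  "target K m x = (\<integral>y. y \<partial>K m x)"

text \<open>cost J_m(theta) = E_m[(Psi_theta(X) - Y)^2] (R = 0), computed via the kernel\<close>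
definition cost :: "(real \<Rightarrow> real) \<Rightarrow> (real^'i) measure \<Rightarrow> ('m \<Rightarrow> real^'i \<Rightarrow> real measure)
    \<Rightarrow> 'm \<Rightarrow> ('i::finite, 'j::finite) param \<Rightarrow> real" where
  "cost \<psi> PX K m \<theta> =
     enn2real (\<integral>\<^sup>+x. (\<integral>\<^sup>+y. ennreal ((response \<psi> \<theta> x - y)\<^sup>2) \<partial>K m x) \<partial>PX)"

definition L2_norm :: "'a measure \<Rightarrow> ('a \<Rightarrow> real) \<Rightarrow> real" where
  "L2_norm P g = sqrt (\<integral>x. (g x)\<^sup>2 \<partial>P)"

definition is_local_min :: "('a::metric_space \<Rightarrow> real) \<Rightarrow> 'a \<Rightarrow> bool" where
  "is_local_min J \<theta> \<longleftrightarrow> (\<exists>e>0. \<forall>\<theta>'. dist \<theta>' \<theta> < e \<longrightarrow> J \<theta> \<le> J \<theta>')"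

end

theory Submission
  imports Defs
begin

text \<open>Fix \<theta>0 in U. Membership in E_P^(0,0,1)(X) implies that the differential of
\<theta> \<mapsto> \<Psi>_\<theta>, restricted to X, is injective at \<theta>0. Hence \<Psi>_\<theta> differs from \<Psi>_\<theta>0 on X
for every \<theta> on a small sphere around \<theta>0 inside U, and by compactness
||\<Psi>_\<theta> - \<Psi>_\<theta>0||^2 \<ge> c > 0 on that sphere. The cost splits as
J_m(\<theta>) = ||\<Psi>_\<theta> - f_m||^2 + E_m[(f_m(X) - Y)^2]. Whenever ||f_M - \<Psi>_\<theta>0||^2 < c/4, an event of
positive probability by the density hypothesis, the triangle inequality makes
||\<Psi>_\<theta> - f_M||^2 larger on the sphere than at its centre, so its minimum over the closed
ball is attained at an interior point, which is a local minimum of J_M in U.\<close>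

lemma real_analytic_has_real_derivative:
  assumes "real_analytic \<psi>"
  shows "(\<psi> has_real_derivative deriv \<psi> x) (at x)"
proof -
  obtain r a where r: "r > 0"
    and a: "\<And>y. \<bar>y - x\<bar> < r \<Longrightarrow> (\<lambda>n. a n * (y - x) ^ n) sums \<psi> y"
    using assms unfolding real_analytic_def by blast
  have "((\<lambda>z. \<Sum>n. a n * z ^ n) has_real_derivative (\<Sum>n. diffs a n * 0 ^ n)) (at 0)"
    by (rule termdiffs_strong'[of r]) (use a[of "x + z" for z] r in \<open>auto simp: sums_iff\<close>)
  then have "((\<lambda>y. \<Sum>n. a n * (y - x) ^ n) has_real_derivative (\<Sum>n. diffs a n * 0 ^ n)) (at x)"
    using DERIV_shift[of "\<lambda>z. \<Sum>n. a n * z ^ n" _ x "- x"] by simp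
  then have "(\<psi> has_real_derivative (\<Sum>n. diffs a n * 0 ^ n)) (at x)"
    by (rule has_field_derivative_transform_within_open[of _ _ _ "ball x r"])
       (use r a in \<open>auto simp: dist_real_def sums_iff abs_minus_commute\<close>)
  then show ?thesis
    using DERIV_deriv_iff_real_differentiable real_differentiable_def by blast
qed

lemma power2_diff_le_twice: "((a::real) - b)\<^sup>2 \<le> 2 * (a - c)\<^sup>2 + 2 * (b - c)\<^sup>2"
  by (smt (verit) sum_squares_ge_zero power2_diff power2_sum zero_le_power2)

lemma continuous_on_slice_snd:
  "continuous_on UNIV (\<lambda>(\<theta>, x). \<Phi> \<theta> x) \<Longrightarrow> continuous_on UNIV (\<Phi> \<theta>)"
  using continuous_on_compose2[of UNIV "\<lambda>(\<theta>, x). \<Phi> \<theta> x" UNIV "Pair \<theta>"]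
  by (simp add: continuous_on_Pair)

lemma continuous_on_slice_fst:
  "continuous_on UNIV (\<lambda>(\<theta>, x). \<Phi> \<theta> x) \<Longrightarrow> continuous_on UNIV (\<lambda>\<theta>. \<Phi> \<theta> x)"
  using continuous_on_compose2[of UNIV "\<lambda>(\<theta>, x). \<Phi> \<theta> x" UNIV "\<lambda>\<theta>. (\<theta>, x)"]
  by (simp add: continuous_on_Pair)

lemma borel_measurable_continuous_on_UNIV:
  assumes "sets PX = sets borel" and "continuous_on UNIV \<phi>"
  shows "\<phi> \<in> borel_measurable PX"
  using borel_measurable_continuous_onI[OF assms(2)] measurable_cong_sets[OF assms(1) refl] by blast

section \<open>Measures with compact support\<close>

lemma AE_in_msupport:
  fixes PX :: "'a::{metric_space,second_countable_topology} measure"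
  assumes "sets PX = sets borel"
  shows "AE x in PX. x \<in> msupport PX"
proof -
  define F where "F = {ball x e | x e. e > 0 \<and> emeasure PX (ball x e) = 0}"
  obtain F' where F': "F' \<subseteq> F" "countable F'" "\<Union>F' = \<Union>F"
    by (rule Lindelof[of F]) (auto simp: F_def)
  have null: "S \<in> null_sets PX" if S: "S \<in> F" for S
  proof -
    obtain x e where "S = ball x e" "emeasure PX (ball x e) = 0"
      using S unfolding F_def by blast
    moreover have "ball x e \<in> sets PX" using assms by simp
    ultimately show ?thesis by (simp add: null_sets_def)
  qed
  have "(\<Union>S\<in>F'. S) \<in> null_sets PX"
    by (rule null_sets_UN') (use F' null in auto)
  moreover have "{x \<in> space PX. x \<notin> msupport PX} \<subseteq> (\<Union>S\<in>F'. S)"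
  proof
    fix x assume "x \<in> {x \<in> space PX. x \<notin> msupport PX}"
    then obtain e where "e > 0" "emeasure PX (ball x e) = 0"
      unfolding msupport_def by auto
    then have "ball x e \<in> F" unfolding F_def by blast
    then have "x \<in> \<Union>F" using \<open>e > 0\<close> by (metis UnionI centre_in_ball)
    then show "x \<in> (\<Union>S\<in>F'. S)" using F' by simp
  qed
  ultimately show ?thesis by (rule AE_I')
qed

lemma AE_bounded_continuous_on_msupport:
  fixes PX :: "'a::{metric_space,second_countable_topology} measure"
  assumes "sets PX = sets borel" and "compact (msupport PX)"
    and "continuous_on UNIV (\<phi> :: 'a \<Rightarrow> real)"
  obtains C where "AE x in PX. \<bar>\<phi> x\<bar> \<le> C"
proof -
  have "bounded (\<phi> ` msupport PX)"
    using assms(2) continuous_on_subset[OF assms(3) subset_UNIV]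
    by (intro compact_imp_bounded compact_continuous_image)
  then obtain C where "\<forall>x\<in>msupport PX. \<bar>\<phi> x\<bar> \<le> C" by (auto simp: bounded_iff)
  with AE_in_msupport[OF assms(1)] have "AE x in PX. \<bar>\<phi> x\<bar> \<le> C" by (auto elim: AE_mp)
  then show ?thesis by (rule that)
qed

lemma integrable_power2_diff_continuous:
  fixes PX :: "'a::{metric_space,second_countable_topology} measure"
  assumes "prob_space PX" and sets: "sets PX = sets borel" and "compact (msupport PX)"
    and \<phi>: "continuous_on UNIV (\<phi> :: 'a \<Rightarrow> real)"
    and g: "g \<in> borel_measurable PX" and "integrable PX (\<lambda>x. (g x)\<^sup>2)"
  shows "integrable PX (\<lambda>x. (\<phi> x - g x)\<^sup>2)"
proof -
  interpret prob_space PX by fact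
  obtain C where C: "AE x in PX. \<bar>\<phi> x\<bar> \<le> C"
    using AE_bounded_continuous_on_msupport[OF sets assms(3) \<phi>] .
  have "integrable PX (\<lambda>x. 2 * C\<^sup>2 + 2 * (g x)\<^sup>2)"
    using assms(6) by auto
  moreover have "(\<lambda>x. (\<phi> x - g x)\<^sup>2) \<in> borel_measurable PX"
    using borel_measurable_continuous_on_UNIV[OF sets \<phi>] g by measurable
  moreover have "AE x in PX. norm ((\<phi> x - g x)\<^sup>2) \<le> norm (2 * C\<^sup>2 + 2 * (g x)\<^sup>2)"
    using C
  proof eventually_elim
    case (elim x)
    then have "(\<phi> x)\<^sup>2 \<le> C\<^sup>2" using power_mono[of "\<bar>\<phi> x\<bar>" C 2] by simp
    then show ?case using power2_diff_le_twice[of "\<phi> x" "g x" 0] by simp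
  qed
  ultimately show ?thesis
    by (rule Bochner_Integration.integrable_bound)
qed

lemma integral_power2_pos_if_nonzero_on_msupport:
  fixes PX :: "'a::{metric_space,second_countable_topology} measure"
  assumes sets: "sets PX = sets borel" and h: "continuous_on UNIV (h :: 'a \<Rightarrow> real)"
    and x0: "x0 \<in> msupport PX" "h x0 \<noteq> 0" and "integrable PX (\<lambda>x. (h x)\<^sup>2)"
  shows "0 < (\<integral>x. (h x)\<^sup>2 \<partial>PX)"
proof (rule ccontr)
  assume "\<not> ?thesis"
  moreover have "0 \<le> (\<integral>x. (h x)\<^sup>2 \<partial>PX)" by simp
  ultimately have "(\<integral>x. (h x)\<^sup>2 \<partial>PX) = 0" by linarith
  then have zero: "AE x in PX. (h x)\<^sup>2 = 0"
    using integral_nonneg_eq_0_iff_AE[OF assms(5)] by simp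
  obtain e where e: "e > 0" "\<And>y. dist x0 y < e \<Longrightarrow> h y \<noteq> 0"
    using continuous_at_avoid[of x0 h 0] h x0(2) by (auto simp: continuous_on_eq_continuous_at)
  have outside: "AE x in PX. x \<notin> ball x0 e"
    using zero by (rule AE_mp) (auto intro!: AE_I2 dest: e(2))
  have space: "space PX = UNIV"
    using sets_eq_imp_space_eq[OF sets] by simp
  have ball: "ball x0 e \<in> sets PX"
    using sets by simp
  have eq: "{x \<in> space PX. \<not> x \<notin> ball x0 e} = ball x0 e"
    using space by auto
  have "emeasure PX (ball x0 e) = 0"
    using AE_iff_measurable[OF ball eq] outside by blast
  with x0(1) e(1) show False
    unfolding msupport_def by auto
qed

lemma continuous_on_integral_power2_diff:
  fixes PX :: "'a::{metric_space,second_countable_topology} measure"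
    and \<Phi> :: "'b::metric_space \<Rightarrow> 'a \<Rightarrow> real"
  assumes "prob_space PX" and sets: "sets PX = sets borel" and "compact (msupport PX)"
    and \<Phi>: "continuous_on UNIV (\<lambda>(\<theta>, x). \<Phi> \<theta> x)" and "compact K"
    and g: "g \<in> borel_measurable PX" and "integrable PX (\<lambda>x. (g x)\<^sup>2)"
  shows "continuous_on K (\<lambda>\<theta>. \<integral>x. (\<Phi> \<theta> x - g x)\<^sup>2 \<partial>PX)"
  unfolding continuous_on_sequentially
proof (intro allI ballI impI, elim conjE)
  interpret prob_space PX by fact
  fix T \<theta> assume "\<theta> \<in> K" and T: "\<forall>n. T n \<in> K" and lim: "T \<longlonglongrightarrow> \<theta>"
  have "bounded ((\<lambda>(\<theta>, x). \<Phi> \<theta> x) ` (K \<times> msupport PX))"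
    using assms(3,5) continuous_on_subset[OF \<Phi> subset_UNIV]
    by (intro compact_imp_bounded compact_continuous_image compact_Times)
  then obtain C where C: "\<And>\<theta> x. \<theta> \<in> K \<Longrightarrow> x \<in> msupport PX \<Longrightarrow> \<bar>\<Phi> \<theta> x\<bar> \<le> C"
    by (force simp: bounded_iff)
  have "(\<lambda>n. \<integral>x. (\<Phi> (T n) x - g x)\<^sup>2 \<partial>PX) \<longlonglongrightarrow> (\<integral>x. (\<Phi> \<theta> x - g x)\<^sup>2 \<partial>PX)"
  proof (rule integral_dominated_convergence[where w = "\<lambda>x. 2 * C\<^sup>2 + 2 * (g x)\<^sup>2"])
    have "\<Phi> \<theta>' \<in> borel_measurable PX" for \<theta>'
      by (rule borel_measurable_continuous_on_UNIV[OF sets continuous_on_slice_snd[OF \<Phi>]])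
    then show "(\<lambda>x. (\<Phi> \<theta> x - g x)\<^sup>2) \<in> borel_measurable PX"
      and "(\<lambda>x. (\<Phi> (T n) x - g x)\<^sup>2) \<in> borel_measurable PX" for n
      using g by measurable
    show "integrable PX (\<lambda>x. 2 * C\<^sup>2 + 2 * (g x)\<^sup>2)" using assms(7) by auto
    show "AE x in PX. (\<lambda>n. (\<Phi> (T n) x - g x)\<^sup>2) \<longlonglongrightarrow> (\<Phi> \<theta> x - g x)\<^sup>2"
    proof (intro AE_I2 tendsto_intros)
      fix x
      have "isCont (\<lambda>\<theta>. \<Phi> \<theta> x) \<theta>"
        using continuous_on_slice_fst[OF \<Phi>, of x] by (simp add: continuous_on_eq_continuous_at)
      then show "(\<lambda>n. \<Phi> (T n) x) \<longlonglongrightarrow> \<Phi> \<theta> x"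
        using isCont_tendsto_compose[OF _ lim] by blast
    qed
    show "AE x in PX. norm ((\<Phi> (T n) x - g x)\<^sup>2) \<le> 2 * C\<^sup>2 + 2 * (g x)\<^sup>2" for n
      using AE_in_msupport[OF sets]
    proof eventually_elim
      case (elim x)
      then have "\<bar>\<Phi> (T n) x\<bar> \<le> C" using C T by blast
      then have "(\<Phi> (T n) x)\<^sup>2 \<le> C\<^sup>2" using power_mono[of "\<bar>\<Phi> (T n) x\<bar>" C 2] by simp
      then show ?case using power2_diff_le_twice[of "\<Phi> (T n) x" "g x" 0] by simp
    qed
  qed
  then show "((\<lambda>\<theta>. \<integral>x. (\<Phi> \<theta> x - g x)\<^sup>2 \<partial>PX) \<circ> T) \<longlonglongrightarrow> (\<integral>x. (\<Phi> \<theta> x - g x)\<^sup>2 \<partial>PX)"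
    by (simp add: o_def)
qed

section \<open>Persistence of local minima of the L2 distance\<close>

lemma local_min_in_ball_if_less_on_sphere:
  fixes F :: "'a::heine_borel \<Rightarrow> real"
  assumes "continuous_on (cball c r) F" and "r > 0"
    and less: "\<And>\<theta>. \<theta> \<in> sphere c r \<Longrightarrow> F c < F \<theta>"
  shows "\<exists>\<theta>\<in>ball c r. is_local_min F \<theta>"
proof -
  have "cball c r \<noteq> {}" using \<open>r > 0\<close> by simp
  then obtain \<theta> where \<theta>: "\<theta> \<in> cball c r" and min: "\<And>\<theta>'. \<theta>' \<in> cball c r \<Longrightarrow> F \<theta> \<le> F \<theta>'"
    using continuous_attains_inf[OF compact_cball _ assms(1)] by blast
  have "F \<theta> \<le> F c" using min \<open>r > 0\<close> by simp
  then have "\<theta> \<notin> sphere c r" by (meson less leD)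
  with \<theta> have "dist c \<theta> < r" by simp
  moreover have "F \<theta> \<le> F \<theta>'" if "dist \<theta>' \<theta> < r - dist c \<theta>" for \<theta>'
    using that dist_triangle[of c \<theta>' \<theta>] by (intro min) (simp add: dist_commute)
  ultimately show ?thesis
    unfolding is_local_min_def by (intro bexI[of _ \<theta>] exI[of _ "r - dist c \<theta>"]) auto
qed

lemma compact_pos_lower_bound:
  fixes G :: "'a::topological_space \<Rightarrow> real"
  assumes "compact S" and "continuous_on S G" and "\<And>x. x \<in> S \<Longrightarrow> 0 < G x"
  obtains m where "m > 0" and "\<And>x. x \<in> S \<Longrightarrow> m \<le> G x"
proof (cases "S = {}")
  case False
  then obtain x0 where "x0 \<in> S" "\<forall>x\<in>S. G x0 \<le> G x"
    using continuous_attains_inf[OF assms(1) _ assms(2)] by blast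
  then show ?thesis using that[of "G x0"] assms(3) by blast
qed (use that[of 1] in simp)

lemma L2_distance_bounded_below_on_sphere:
  fixes PX :: "'a::{metric_space,second_countable_topology} measure"
    and \<Phi> :: "'b::euclidean_space \<Rightarrow> 'a \<Rightarrow> real"
  assumes "prob_space PX" and sets: "sets PX = sets borel" and supp: "compact (msupport PX)"
    and \<Phi>: "continuous_on UNIV (\<lambda>(\<theta>, x). \<Phi> \<theta> x)"
    and sep: "\<And>\<theta>. \<theta> \<in> sphere \<theta>0 r \<Longrightarrow> \<exists>x\<in>msupport PX. \<Phi> \<theta> x \<noteq> \<Phi> \<theta>0 x"
  obtains m where "m > 0" and "\<And>\<theta>. \<theta> \<in> sphere \<theta>0 r \<Longrightarrow> m \<le> (\<integral>x. (\<Phi> \<theta> x - \<Phi> \<theta>0 x)\<^sup>2 \<partial>PX)"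
proof (rule compact_pos_lower_bound[OF compact_sphere])
  have cont: "continuous_on UNIV (\<Phi> \<theta>)" for \<theta>
    by (rule continuous_on_slice_snd[OF \<Phi>])
  have meas: "\<Phi> \<theta> \<in> borel_measurable PX" for \<theta>
    by (rule borel_measurable_continuous_on_UNIV[OF sets cont])
  have int_sq: "integrable PX (\<lambda>x. (\<Phi> \<theta> x)\<^sup>2)" for \<theta>
    using integrable_power2_diff_continuous[OF assms(1) sets supp cont, of "\<lambda>_. 0"] by simp
  show "continuous_on (sphere \<theta>0 r) (\<lambda>\<theta>. \<integral>x. (\<Phi> \<theta> x - \<Phi> \<theta>0 x)\<^sup>2 \<partial>PX)"
    by (rule continuous_on_integral_power2_diff[OF assms(1) sets supp \<Phi> compact_sphere meas int_sq])
  show "0 < (\<integral>x. (\<Phi> \<theta> x - \<Phi> \<theta>0 x)\<^sup>2 \<partial>PX)" if \<theta>: "\<theta> \<in> sphere \<theta>0 r" for \<theta>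
  proof -
    obtain x where "x \<in> msupport PX" "\<Phi> \<theta> x - \<Phi> \<theta>0 x \<noteq> 0"
      using sep[OF \<theta>] by auto
    then show ?thesis
      by (intro integral_power2_pos_if_nonzero_on_msupport[OF sets continuous_on_diff[OF cont cont]]
                integrable_power2_diff_continuous[OF assms(1) sets supp cont meas int_sq])
  qed
qed (rule that)

lemma local_min_L2_distance_near:
  fixes PX :: "'a::{metric_space,second_countable_topology} measure"
    and \<Phi> :: "'b::euclidean_space \<Rightarrow> 'a \<Rightarrow> real"
  assumes "prob_space PX" and sets: "sets PX = sets borel" and supp: "compact (msupport PX)"
    and \<Phi>: "continuous_on UNIV (\<lambda>(\<theta>, x). \<Phi> \<theta> x)" and "r > 0"
    and sep: "\<And>\<theta>. \<theta> \<in> sphere \<theta>0 r \<Longrightarrow> \<exists>x\<in>msupport PX. \<Phi> \<theta> x \<noteq> \<Phi> \<theta>0 x"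
  obtains \<epsilon> where "\<epsilon> > 0"
    and "\<And>g. g \<in> borel_measurable PX \<Longrightarrow> integrable PX (\<lambda>x. (g x)\<^sup>2) \<Longrightarrow>
           (\<integral>x. (g x - \<Phi> \<theta>0 x)\<^sup>2 \<partial>PX) < \<epsilon> \<Longrightarrow>
           \<exists>\<theta>\<in>ball \<theta>0 r. is_local_min (\<lambda>\<theta>. \<integral>x. (\<Phi> \<theta> x - g x)\<^sup>2 \<partial>PX) \<theta>"
proof -
  obtain m where "m > 0"
    and m: "\<And>\<theta>. \<theta> \<in> sphere \<theta>0 r \<Longrightarrow> m \<le> (\<integral>x. (\<Phi> \<theta> x - \<Phi> \<theta>0 x)\<^sup>2 \<partial>PX)"
    using L2_distance_bounded_below_on_sphere[OF assms(1) sets supp \<Phi> sep] by blast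
  have cont: "continuous_on UNIV (\<Phi> \<theta>)" for \<theta>
    by (rule continuous_on_slice_snd[OF \<Phi>])
  have int: "integrable PX (\<lambda>x. (\<Phi> \<theta> x - g x)\<^sup>2)"
    if "g \<in> borel_measurable PX" "integrable PX (\<lambda>x. (g x)\<^sup>2)" for g \<theta>
    by (rule integrable_power2_diff_continuous[OF assms(1) sets supp cont that])
  show ?thesis
  proof (rule that[of "m / 4"])
    show "m / 4 > 0" using \<open>m > 0\<close> by simp
    fix g assume g: "g \<in> borel_measurable PX" "integrable PX (\<lambda>x. (g x)\<^sup>2)"
      and close: "(\<integral>x. (g x - \<Phi> \<theta>0 x)\<^sup>2 \<partial>PX) < m / 4"
    define F where "F \<theta> = (\<integral>x. (\<Phi> \<theta> x - g x)\<^sup>2 \<partial>PX)" for \<theta>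
    have "F \<theta>0 < F \<theta>" if "\<theta> \<in> sphere \<theta>0 r" for \<theta>
    proof -
      have "m \<le> (\<integral>x. (\<Phi> \<theta> x - \<Phi> \<theta>0 x)\<^sup>2 \<partial>PX)"
        by (rule m[OF that])
      also have "\<dots> \<le> (\<integral>x. 2 * (\<Phi> \<theta> x - g x)\<^sup>2 + 2 * (\<Phi> \<theta>0 x - g x)\<^sup>2 \<partial>PX)"
        using int[OF g] int[OF borel_measurable_continuous_on_UNIV[OF sets cont]
            integrable_power2_diff_continuous[OF assms(1) sets supp cont, of "\<lambda>_. 0", simplified]]
        by (intro integral_mono power2_diff_le_twice) auto
      also have "\<dots> = 2 * F \<theta> + 2 * F \<theta>0"
        unfolding F_def using int[OF g] by simp
      finally show ?thesis
        using close unfolding F_def by (simp add: power2_commute)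
    qed
    moreover have "continuous_on (cball \<theta>0 r) F"
      unfolding F_def
      by (rule continuous_on_integral_power2_diff[OF assms(1) sets supp \<Phi> compact_cball g])
    ultimately show "\<exists>\<theta>\<in>ball \<theta>0 r. is_local_min F \<theta>"
      using local_min_in_ball_if_less_on_sphere \<open>r > 0\<close> by blast
  qed
qed

section \<open>Local injectivity\<close>

lemma has_derivative_zero_at_limit_direction:
  fixes f :: "'a::real_normed_vector \<Rightarrow> 'b::real_normed_vector"
  assumes D: "(f has_derivative D) (at \<theta>0)"
    and h: "h \<longlonglongrightarrow> 0" "\<And>n. h n \<noteq> 0" and l: "(\<lambda>n. h n /\<^sub>R norm (h n)) \<longlonglongrightarrow> l"
    and const: "\<And>n. f (\<theta>0 + h n) = f \<theta>0"
  shows "D l = 0"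
proof -
  have lin: "bounded_linear D"
    using D by (rule has_derivative_bounded_linear)
  have "((\<lambda>k. norm (f (\<theta>0 + k) - f \<theta>0 - D k) / norm k) \<longlongrightarrow> 0) (at 0)"
    using D unfolding has_derivative_at by blast
  moreover have "filterlim h (at 0) sequentially"
    using h by (intro filterlim_atI) auto
  ultimately have "(\<lambda>n. norm (f (\<theta>0 + h n) - f \<theta>0 - D (h n)) / norm (h n)) \<longlonglongrightarrow> 0"
    by (rule filterlim_compose)
  moreover have "norm (f (\<theta>0 + h n) - f \<theta>0 - D (h n)) / norm (h n) = norm (D (h n /\<^sub>R norm (h n)))" for n
    using const[of n] by (simp add: linear_cmul[OF bounded_linear.linear[OF lin]] divide_inverse mult.commute)
  ultimately have "(\<lambda>n. norm (D (h n /\<^sub>R norm (h n)))) \<longlonglongrightarrow> 0"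
    by simp
  moreover have "(\<lambda>n. norm (D (h n /\<^sub>R norm (h n)))) \<longlonglongrightarrow> norm (D l)"
    by (intro tendsto_norm bounded_linear.tendsto[OF lin] l)
  ultimately show ?thesis
    using LIMSEQ_unique by fastforce
qed

text \<open>Finite dimension enters through compactness of the unit sphere: the normalised
displacements of a sequence of collisions accumulate at a unit vector in the common kernel.\<close>

lemma locally_injective_if_common_kernel_trivial:
  fixes \<Phi> :: "'b::euclidean_space \<Rightarrow> 'a \<Rightarrow> 'c::real_normed_vector"
  assumes D: "\<And>x. x \<in> S \<Longrightarrow> ((\<lambda>\<theta>. \<Phi> \<theta> x) has_derivative D x) (at \<theta>0)"
    and kernel: "\<And>v. (\<And>x. x \<in> S \<Longrightarrow> D x v = 0) \<Longrightarrow> v = 0"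
  obtains r where "r > 0"
    and "\<And>\<theta>. 0 < dist \<theta> \<theta>0 \<Longrightarrow> dist \<theta> \<theta>0 < r \<Longrightarrow> \<exists>x\<in>S. \<Phi> \<theta> x \<noteq> \<Phi> \<theta>0 x"
proof (rule ccontr)
  assume "\<not> thesis"
  have "\<exists>\<theta>. 0 < dist \<theta> \<theta>0 \<and> dist \<theta> \<theta>0 < 1 / Suc n \<and> (\<forall>x\<in>S. \<Phi> \<theta> x = \<Phi> \<theta>0 x)" for n
  proof (rule ccontr)
    assume "\<nexists>\<theta>. 0 < dist \<theta> \<theta>0 \<and> dist \<theta> \<theta>0 < 1 / Suc n \<and> (\<forall>x\<in>S. \<Phi> \<theta> x = \<Phi> \<theta>0 x)"
    then have "\<And>\<theta>. 0 < dist \<theta> \<theta>0 \<Longrightarrow> dist \<theta> \<theta>0 < 1 / Suc n \<Longrightarrow> \<exists>x\<in>S. \<Phi> \<theta> x \<noteq> \<Phi> \<theta>0 x"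
      by blast
    with that[of "1 / Suc n"] \<open>\<not> thesis\<close> show False by simp
  qed
  then obtain T where T: "\<And>n. 0 < dist (T n) \<theta>0" "\<And>n. dist (T n) \<theta>0 < 1 / Suc n"
    "\<And>n x. x \<in> S \<Longrightarrow> \<Phi> (T n) x = \<Phi> \<theta>0 x"
    by metis
  define h where "h n = T n - \<theta>0" for n
  have h_nz: "h n \<noteq> 0" for n
    using T(1)[of n] by (simp add: h_def dist_norm)
  have "(\<lambda>n. dist (T n) \<theta>0) \<longlonglongrightarrow> 0"
    by (intro tendsto_sandwich[OF _ _ tendsto_const LIMSEQ_Suc[OF lim_inverse_n']])
       (auto intro!: always_eventually less_imp_le T(2) simp del: of_nat_Suc)
  then have h0: "h \<longlonglongrightarrow> 0"
    unfolding h_def by (simp add: dist_norm tendsto_norm_zero_iff LIM_zero)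
  define u where "u n = h n /\<^sub>R norm (h n)" for n
  have "u n \<in> sphere 0 1" for n
    using h_nz by (simp add: u_def)
  then obtain l \<sigma> where l: "l \<in> sphere 0 1" and \<sigma>: "strict_mono \<sigma>" and lim: "(u \<circ> \<sigma>) \<longlonglongrightarrow> l"
    using compact_imp_seq_compact[OF compact_sphere, of 0 1] unfolding seq_compact_def by metis
  have "D x l = 0" if x: "x \<in> S" for x
  proof (rule has_derivative_zero_at_limit_direction[OF D[OF x]])
    show "(h \<circ> \<sigma>) \<longlonglongrightarrow> 0" by (rule LIMSEQ_subseq_LIMSEQ[OF h0 \<sigma>])
    show "(\<lambda>n. (h \<circ> \<sigma>) n /\<^sub>R norm ((h \<circ> \<sigma>) n)) \<longlonglongrightarrow> l" using lim by (simp add: o_def u_def)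
    show "(h \<circ> \<sigma>) n \<noteq> 0" "\<Phi> (\<theta>0 + (h \<circ> \<sigma>) n) x = \<Phi> \<theta>0 x" for n
      using h_nz T(3)[OF x] by (auto simp: h_def)
  qed
  with kernel l show False by fastforce
qed

section \<open>The network response\<close>

lemma continuous_on_response:
  assumes "continuous_on UNIV \<psi>"
  shows "continuous_on UNIV (\<lambda>(\<theta>, x). response \<psi> \<theta> (x :: real^'i::finite))"
proof -
  have \<psi>: "isCont \<psi> t" for t
    using assms by (simp add: continuous_on_eq_continuous_at)
  have "continuous_on UNIV (\<lambda>p. response \<psi> (fst p) (snd p :: real^'i))"
    unfolding response_def preact_def
    by (intro continuous_at_imp_continuous_on ballI continuous_intros
              continuous_at_compose[OF _ \<psi>, unfolded o_def])
  then show ?thesis by (simp add: case_prod_beta)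
qed

definition response_differential ::
  "(real \<Rightarrow> real) \<Rightarrow> ('i::finite, 'j::finite) param \<Rightarrow> real^'i \<Rightarrow> ('i, 'j) param \<Rightarrow> real" where
  "response_differential \<psi> \<theta> x v = snd (snd (snd v)) +
     (\<Sum>j\<in>UNIV. \<psi> (preact \<theta> x j) * fst (snd (snd v)) $ j
                + deriv \<psi> (preact \<theta> x j) * preact v x j * fst (snd (snd \<theta>)) $ j)"

lemma has_derivative_vec_nth:
  "(f has_derivative f') F \<Longrightarrow> ((\<lambda>x. f x $ i) has_derivative (\<lambda>h. f' h $ i)) F"
  by (rule bounded_linear.has_derivative[OF bounded_linear_vec_nth])

lemma has_derivative_response:
  assumes "\<And>t. (\<psi> has_real_derivative deriv \<psi> t) (at t)"
  shows "((\<lambda>\<theta>. response \<psi> \<theta> x) has_derivative response_differential \<psi> \<theta>0 x) (at \<theta>0)"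
  unfolding response_def response_differential_def[abs_def] preact_def
  by (auto intro!: derivative_eq_intros has_derivative_vec_nth DERIV_compose_FDERIV[OF assms]
           simp: algebra_simps sum.distrib)

lemma response_differential_eq_0_imp_eq_0:
  assumes "\<theta> \<in> EP001 \<psi> S" and "\<And>x. x \<in> S \<Longrightarrow> response_differential \<psi> \<theta> x v = 0"
  shows "v = 0"
proof -
  let ?w = "fst (snd (snd \<theta>))"
  have w: "\<And>k. ?w $ k \<noteq> 0" and indep: "\<And>c p0 c1 a1. (\<forall>x\<in>S. c + (\<Sum>j\<in>UNIV. p0 j * \<psi> (preact \<theta> x j)
        + (c1 j + (\<Sum>i\<in>UNIV. a1 j i * x $ i)) * deriv \<psi> (preact \<theta> x j)) = 0)
      \<Longrightarrow> c = 0 \<and> (\<forall>j. p0 j = 0) \<and> (\<forall>j. c1 j = 0) \<and> (\<forall>j i. a1 j i = 0)"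
    using assms(1) unfolding EP001_def by auto
  have "snd (snd (snd v)) = 0 \<and> (\<forall>j. fst (snd (snd v)) $ j = 0) \<and> (\<forall>j. fst (snd v) $ j * ?w $ j = 0)
     \<and> (\<forall>j i. fst v $ (i, j) * ?w $ j = 0)"
  proof (rule indep, intro ballI)
    fix x assume "x \<in> S"
    have "response_differential \<psi> \<theta> x v = snd (snd (snd v)) +
       (\<Sum>j\<in>UNIV. fst (snd (snd v)) $ j * \<psi> (preact \<theta> x j)
         + (fst (snd v) $ j * ?w $ j + (\<Sum>i\<in>UNIV. fst v $ (i, j) * ?w $ j * x $ i))
           * deriv \<psi> (preact \<theta> x j))" (is "_ = ?combination")
      unfolding response_differential_def preact_def
      by (intro arg_cong2[where f="(+)"] refl sum.cong)
         (auto simp: algebra_simps sum_distrib_left sum_distrib_right)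
    with assms(2)[OF \<open>x \<in> S\<close>] show "?combination = 0"
      by simp
  qed
  then show "v = 0"
    using w by (auto simp: vec_eq_iff prod_eq_iff)
qed

section \<open>Bias-variance decomposition of the cost\<close>

lemma nn_integral_power2_diff_mean:
  fixes N :: "real measure"
  assumes "prob_space N" and sets: "sets N = sets borel"
    and fin: "(\<integral>\<^sup>+y. ennreal (y\<^sup>2) \<partial>N) < \<infinity>"
  shows "(\<integral>\<^sup>+y. ennreal ((a - y)\<^sup>2) \<partial>N)
       = ennreal ((a - (\<integral>y. y \<partial>N))\<^sup>2) + (\<integral>\<^sup>+y. ennreal (((\<integral>y. y \<partial>N) - y)\<^sup>2) \<partial>N)"
proof -
  interpret prob_space N by fact
  have meas: "(\<lambda>y::real. y) \<in> borel_measurable N"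
    by (simp add: measurable_cong_sets[OF sets refl])
  have int2: "integrable N (\<lambda>y. y\<^sup>2)"
    using fin meas by (intro integrableI_nonneg) auto
  have int1: "integrable N (\<lambda>y. y)"
    by (rule square_integrable_imp_integrable[OF meas int2])
  have int: "integrable N (\<lambda>y. (b - y)\<^sup>2)" for b
    using int1 int2 by (simp add: power2_diff)
  define \<mu> where "\<mu> = (\<integral>y. y \<partial>N)"
  have "(\<integral>y. (a - y)\<^sup>2 \<partial>N) = (\<integral>y. (a - \<mu>)\<^sup>2 + 2 * (a - \<mu>) * (\<mu> - y) + (\<mu> - y)\<^sup>2 \<partial>N)"
    by (rule Bochner_Integration.integral_cong) (auto simp: power2_eq_square algebra_simps)
  also have "\<dots> = (a - \<mu>)\<^sup>2 + (\<integral>y. (\<mu> - y)\<^sup>2 \<partial>N)"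
    using int1 int[of \<mu>] by (simp add: \<mu>_def prob_space)
  finally show ?thesis
    using int[of a] int[of \<mu>]
    by (simp add: nn_integral_eq_integral ennreal_plus \<mu>_def)
qed

lemma borel_measurable_kernel_mean:
  assumes "Kx \<in> measurable PX (subprob_algebra borel)"
  shows "(\<lambda>x. \<integral>y. y \<partial>Kx x :: real) \<in> borel_measurable PX"
  by (rule measurable_compose[OF assms integral_measurable_subprob_algebra]) simp

lemma AE_nn_integral_power2_diff_kernel_mean:
  fixes Kx :: "'a \<Rightarrow> real measure"
  assumes kern: "Kx \<in> measurable PX (subprob_algebra borel)"
    and prob: "\<And>x. x \<in> space PX \<Longrightarrow> prob_space (Kx x)"
    and fin: "(\<integral>\<^sup>+x. (\<integral>\<^sup>+y. ennreal (y\<^sup>2) \<partial>Kx x) \<partial>PX) < \<infinity>"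
  shows "AE x in PX. \<forall>a. (\<integral>\<^sup>+y. ennreal ((a - y)\<^sup>2) \<partial>Kx x)
     = ennreal ((a - (\<integral>y. y \<partial>Kx x))\<^sup>2) + (\<integral>\<^sup>+y. ennreal (((\<integral>y. y \<partial>Kx x) - y)\<^sup>2) \<partial>Kx x)"
proof -
  have "(\<lambda>x. \<integral>\<^sup>+y. ennreal (y\<^sup>2) \<partial>Kx x) \<in> borel_measurable PX"
    by (rule measurable_compose[OF kern nn_integral_measurable_subprob_algebra]) simp
  then have "AE x in PX. (\<integral>\<^sup>+y. ennreal (y\<^sup>2) \<partial>Kx x) \<noteq> \<infinity>"
    using fin by (intro nn_integral_PInf_AE) auto
  then show ?thesis
  proof (rule AE_mp, intro AE_I2 impI allI)
    fix x a assume x: "x \<in> space PX" and "(\<integral>\<^sup>+y. ennreal (y\<^sup>2) \<partial>Kx x) \<noteq> \<infinity>"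
    then have "(\<integral>\<^sup>+y. ennreal (y\<^sup>2) \<partial>Kx x) < \<infinity>"
      by (simp add: less_top)
    then show "(\<integral>\<^sup>+y. ennreal ((a - y)\<^sup>2) \<partial>Kx x)
        = ennreal ((a - (\<integral>y. y \<partial>Kx x))\<^sup>2) + (\<integral>\<^sup>+y. ennreal (((\<integral>y. y \<partial>Kx x) - y)\<^sup>2) \<partial>Kx x)"
      by (rule nn_integral_power2_diff_mean[OF prob[OF x] subprob_measurableD(2)[OF kern x]])
  qed
qed

lemma integrable_kernel_mean_power2:
  fixes Kx :: "'a \<Rightarrow> real measure"
  assumes kern: "Kx \<in> measurable PX (subprob_algebra borel)"
    and prob: "\<And>x. x \<in> space PX \<Longrightarrow> prob_space (Kx x)"
    and fin: "(\<integral>\<^sup>+x. (\<integral>\<^sup>+y. ennreal (y\<^sup>2) \<partial>Kx x) \<partial>PX) < \<infinity>"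
  shows "integrable PX (\<lambda>x. (\<integral>y. y \<partial>Kx x)\<^sup>2)"
proof -
  have "AE x in PX. ennreal ((\<integral>y. y \<partial>Kx x)\<^sup>2) \<le> (\<integral>\<^sup>+y. ennreal (y\<^sup>2) \<partial>Kx x)"
  proof (rule eventually_mono[OF AE_nn_integral_power2_diff_kernel_mean[OF kern prob fin]])
    fix x
    assume "\<forall>a. (\<integral>\<^sup>+y. ennreal ((a - y)\<^sup>2) \<partial>Kx x) = ennreal ((a - (\<integral>y. y \<partial>Kx x))\<^sup>2)
                  + (\<integral>\<^sup>+y. ennreal (((\<integral>y. y \<partial>Kx x) - y)\<^sup>2) \<partial>Kx x)"
    from this[rule_format, of 0]
    show "ennreal ((\<integral>y. y \<partial>Kx x)\<^sup>2) \<le> (\<integral>\<^sup>+y. ennreal (y\<^sup>2) \<partial>Kx x)"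
      by (simp add: add_increasing2)
  qed
  then have "(\<integral>\<^sup>+x. ennreal ((\<integral>y. y \<partial>Kx x)\<^sup>2) \<partial>PX) \<le> (\<integral>\<^sup>+x. (\<integral>\<^sup>+y. ennreal (y\<^sup>2) \<partial>Kx x) \<partial>PX)"
    by (rule nn_integral_mono_AE)
  then have "(\<integral>\<^sup>+x. ennreal ((\<integral>y. y \<partial>Kx x)\<^sup>2) \<partial>PX) < \<infinity>"
    using fin by (rule le_less_trans)
  moreover have "(\<lambda>x. (\<integral>y. y \<partial>Kx x)\<^sup>2) \<in> borel_measurable PX"
    using borel_measurable_kernel_mean[OF kern] by measurable
  ultimately show ?thesis
    by (intro integrableI_nonneg) auto
qed

lemma nn_integral_kernel_power2_diff_eq:
  fixes Kx :: "'a \<Rightarrow> real measure"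
  assumes kern: "Kx \<in> measurable PX (subprob_algebra borel)"
    and prob: "\<And>x. x \<in> space PX \<Longrightarrow> prob_space (Kx x)"
    and fin: "(\<integral>\<^sup>+x. (\<integral>\<^sup>+y. ennreal (y\<^sup>2) \<partial>Kx x) \<partial>PX) < \<infinity>"
    and \<phi>: "\<phi> \<in> borel_measurable PX" and int: "integrable PX (\<lambda>x. (\<phi> x - (\<integral>y. y \<partial>Kx x))\<^sup>2)"
  shows "enn2real (\<integral>\<^sup>+x. (\<integral>\<^sup>+y. ennreal ((\<phi> x - y)\<^sup>2) \<partial>Kx x) \<partial>PX)
       = (\<integral>x. (\<phi> x - (\<integral>y. y \<partial>Kx x))\<^sup>2 \<partial>PX)
         + enn2real (\<integral>\<^sup>+x. (\<integral>\<^sup>+y. ennreal (((\<integral>y. y \<partial>Kx x) - y)\<^sup>2) \<partial>Kx x) \<partial>PX)"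
proof -
  define f where "f x = (\<integral>y. y \<partial>Kx x)" for x
  define V where "V x = (\<integral>\<^sup>+y. ennreal ((f x - y)\<^sup>2) \<partial>Kx x)" for x
  have decomp: "AE x in PX. \<forall>a. (\<integral>\<^sup>+y. ennreal ((a - y)\<^sup>2) \<partial>Kx x) = ennreal ((a - f x)\<^sup>2) + V x"
    using AE_nn_integral_power2_diff_kernel_mean[OF kern prob fin] by (simp add: f_def V_def)
  have f_meas: "f \<in> borel_measurable PX"
    unfolding f_def by (rule borel_measurable_kernel_mean[OF kern])
  note f_meas[measurable]
  have V_meas: "V \<in> borel_measurable PX"
    unfolding V_def by (intro nn_integral_measurable_subprob_algebra2[OF _ kern]) measurable
  have "AE x in PX. V x \<le> (\<integral>\<^sup>+y. ennreal (y\<^sup>2) \<partial>Kx x)"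
  proof (rule eventually_mono[OF decomp])
    fix x
    assume "\<forall>a. (\<integral>\<^sup>+y. ennreal ((a - y)\<^sup>2) \<partial>Kx x) = ennreal ((a - f x)\<^sup>2) + V x"
    from this[rule_format, of 0] show "V x \<le> (\<integral>\<^sup>+y. ennreal (y\<^sup>2) \<partial>Kx x)"
      by (simp add: add_increasing)
  qed
  then have "(\<integral>\<^sup>+x. V x \<partial>PX) \<le> (\<integral>\<^sup>+x. (\<integral>\<^sup>+y. ennreal (y\<^sup>2) \<partial>Kx x) \<partial>PX)"
    by (rule nn_integral_mono_AE)
  then have V_fin: "(\<integral>\<^sup>+x. V x \<partial>PX) < \<infinity>"
    using fin by (rule le_less_trans)
  have "(\<integral>\<^sup>+x. (\<integral>\<^sup>+y. ennreal ((\<phi> x - y)\<^sup>2) \<partial>Kx x) \<partial>PX)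
      = (\<integral>\<^sup>+x. ennreal ((\<phi> x - f x)\<^sup>2) + V x \<partial>PX)"
    by (rule nn_integral_cong_AE, rule eventually_mono[OF decomp]) simp
  also have "\<dots> = (\<integral>\<^sup>+x. ennreal ((\<phi> x - f x)\<^sup>2) \<partial>PX) + (\<integral>\<^sup>+x. V x \<partial>PX)"
    using \<phi> f_meas V_meas by (intro nn_integral_add) measurable
  also have "(\<integral>\<^sup>+x. ennreal ((\<phi> x - f x)\<^sup>2) \<partial>PX) = ennreal (\<integral>x. (\<phi> x - f x)\<^sup>2 \<partial>PX)"
    using int unfolding f_def by (intro nn_integral_eq_integral) auto
  finally show ?thesis
    using V_fin by (simp add: enn2real_plus f_def V_def)
qed

lemma measurable_kernel_section:
  fixes K :: "'m \<Rightarrow> 'a::topological_space \<Rightarrow> 'b::topological_space measure"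
  assumes "\<And>B. B \<in> sets borel \<Longrightarrow> (\<lambda>(m, x). emeasure (K m x) B) \<in> borel_measurable (Mm \<Otimes>\<^sub>M borel)"
    and "m \<in> space Mm" and "\<And>x. subprob_space (K m x)" and "\<And>x. sets (K m x) = sets borel"
    and "sets PX = sets borel"
  shows "K m \<in> measurable PX (subprob_algebra borel)"
proof (rule measurable_subprob_algebra)
  fix B :: "'b set" assume "B \<in> sets borel"
  have "(\<lambda>x. emeasure (K m x) B) \<in> borel_measurable borel"
    using measurable_Pair2[OF assms(1)[OF \<open>B \<in> sets borel\<close>] assms(2)] by simp
  then show "(\<lambda>x. emeasure (K m x) B) \<in> borel_measurable PX"
    using measurable_cong_sets[OF assms(5) refl] by blast
qed (use assms(3,4) in auto)

lemma cost_eq_L2_distance_plus_noise: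
  fixes PX :: "(real^'i::finite) measure" and \<theta> :: "('i, 'j::finite) param"
  assumes "prob_space PX" and sets: "sets PX = sets borel" and "compact (msupport PX)"
    and "continuous_on UNIV \<psi>"
    and kern: "K m \<in> measurable PX (subprob_algebra borel)"
    and prob: "\<And>x. prob_space (K m x)"
    and fin: "(\<integral>\<^sup>+x. (\<integral>\<^sup>+y. ennreal (y\<^sup>2) \<partial>K m x) \<partial>PX) < \<infinity>"
  shows "cost \<psi> PX K m \<theta> = (\<integral>x. (response \<psi> \<theta> x - target K m x)\<^sup>2 \<partial>PX)
           + enn2real (\<integral>\<^sup>+x. (\<integral>\<^sup>+y. ennreal ((target K m x - y)\<^sup>2) \<partial>K m x) \<partial>PX)"
proof -
  have cont: "continuous_on UNIV (response \<psi> \<theta>)"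
    by (rule continuous_on_slice_snd[OF continuous_on_response[OF assms(4)]])
  have "integrable PX (\<lambda>x. (response \<psi> \<theta> x - (\<integral>y. y \<partial>K m x))\<^sup>2)"
    using integrable_power2_diff_continuous[OF assms(1-3) cont borel_measurable_kernel_mean[OF kern]
        integrable_kernel_mean_power2[OF kern prob fin]] .
  then show ?thesis
    unfolding cost_def target_def
    by (rule nn_integral_kernel_power2_diff_eq[OF kern prob fin borel_measurable_continuous_on_UNIV[OF sets cont]])
qed

lemma EP001_separating_sphere:
  fixes U :: "('i::finite, 'j::finite) param set"
  assumes d\<psi>: "\<And>t. (\<psi> has_real_derivative deriv \<psi> t) (at t)"
    and "open U" and "\<theta>0 \<in> U" and "U \<subseteq> EP001 \<psi> S"
  obtains r where "r > 0" and "ball \<theta>0 r \<subseteq> U"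
    and "\<And>\<theta>. \<theta> \<in> sphere \<theta>0 r \<Longrightarrow> \<exists>x\<in>S. response \<psi> \<theta> x \<noteq> response \<psi> \<theta>0 x"
proof -
  have \<theta>0: "\<theta>0 \<in> EP001 \<psi> S"
    using assms(3,4) by blast
  obtain r0 where "r0 > 0" and inj: "\<And>\<theta>. 0 < dist \<theta> \<theta>0 \<Longrightarrow> dist \<theta> \<theta>0 < r0 \<Longrightarrow>
      \<exists>x\<in>S. response \<psi> \<theta> x \<noteq> response \<psi> \<theta>0 x"
    using locally_injective_if_common_kernel_trivial[where \<Phi> = "response \<psi>"
        and D = "response_differential \<psi> \<theta>0", OF has_derivative_response[OF d\<psi>]
        response_differential_eq_0_imp_eq_0[OF \<theta>0]] by blast
  obtain e where "e > 0" "ball \<theta>0 e \<subseteq> U"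
    using assms(2,3) open_contains_ball by blast
  define r where "r = min r0 e / 2"
  have "r > 0" "r < r0" "r \<le> e"
    using \<open>r0 > 0\<close> \<open>e > 0\<close> by (simp_all add: r_def)
  show ?thesis
  proof (rule that[of r])
    show "r > 0" by fact
    show "ball \<theta>0 r \<subseteq> U"
      using \<open>ball \<theta>0 e \<subseteq> U\<close> subset_ball[OF \<open>r \<le> e\<close>] by blast
    show "\<exists>x\<in>S. response \<psi> \<theta> x \<noteq> response \<psi> \<theta>0 x" if "\<theta> \<in> sphere \<theta>0 r" for \<theta>
    proof (rule inj)
      show "0 < dist \<theta> \<theta>0" "dist \<theta> \<theta>0 < r0"
        using that \<open>r > 0\<close> \<open>r < r0\<close> by (simp_all add: dist_commute)
    qed
  qed
qed

lemma local_min_cost_if_target_near: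
  fixes PX :: "(real^'i::finite) measure" and U :: "('i, 'j::finite) param set"
    and K :: "'m \<Rightarrow> real^'i \<Rightarrow> real measure"
  assumes d\<psi>: "\<And>t. (\<psi> has_real_derivative deriv \<psi> t) (at t)"
    and PX: "prob_space PX" "sets PX = sets borel" "compact (msupport PX)"
    and U: "open U" "\<theta>0 \<in> U" "U \<subseteq> EP001 \<psi> (msupport PX)"
  obtains \<epsilon> where "\<epsilon> > 0"
    and "\<And>m. K m \<in> measurable PX (subprob_algebra borel) \<Longrightarrow> (\<And>x. prob_space (K m x)) \<Longrightarrow>
           (\<integral>\<^sup>+x. (\<integral>\<^sup>+y. ennreal (y\<^sup>2) \<partial>K m x) \<partial>PX) < \<infinity> \<Longrightarrow>
           (\<integral>x. (target K m x - response \<psi> \<theta>0 x)\<^sup>2 \<partial>PX) < \<epsilon> \<Longrightarrow>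
           \<exists>\<theta>\<in>U. is_local_min (cost \<psi> PX K m) \<theta>"
proof -
  have \<psi>_cont: "continuous_on UNIV \<psi>"
    using d\<psi> by (intro continuous_at_imp_continuous_on ballI DERIV_isCont)
  have resp_cont: "continuous_on UNIV (\<lambda>(\<theta> :: ('i, 'j) param, x). response \<psi> \<theta> x)"
    by (rule continuous_on_response[OF \<psi>_cont])
  obtain r where "r > 0" "ball \<theta>0 r \<subseteq> U"
    and sep: "\<And>\<theta>. \<theta> \<in> sphere \<theta>0 r \<Longrightarrow> \<exists>x\<in>msupport PX. response \<psi> \<theta> x \<noteq> response \<psi> \<theta>0 x"
    using EP001_separating_sphere[OF d\<psi> U] by blast
  obtain \<epsilon> where "\<epsilon> > 0" and near: "\<And>g. g \<in> borel_measurable PX \<Longrightarrow> integrable PX (\<lambda>x. (g x)\<^sup>2) \<Longrightarrow>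
      (\<integral>x. (g x - response \<psi> \<theta>0 x)\<^sup>2 \<partial>PX) < \<epsilon> \<Longrightarrow>
      \<exists>\<theta>\<in>ball \<theta>0 r. is_local_min (\<lambda>\<theta>. \<integral>x. (response \<psi> \<theta> x - g x)\<^sup>2 \<partial>PX) \<theta>"
    using local_min_L2_distance_near[OF PX resp_cont \<open>r > 0\<close> sep] by blast
  show ?thesis
  proof (rule that[OF \<open>\<epsilon> > 0\<close>])
    fix m
    assume kern: "K m \<in> measurable PX (subprob_algebra borel)" and prob: "\<And>x. prob_space (K m x)"
      and fin: "(\<integral>\<^sup>+x. (\<integral>\<^sup>+y. ennreal (y\<^sup>2) \<partial>K m x) \<partial>PX) < \<infinity>"
      and close: "(\<integral>x. (target K m x - response \<psi> \<theta>0 x)\<^sup>2 \<partial>PX) < \<epsilon>"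
    have target: "target K m = (\<lambda>x. \<integral>y. y \<partial>K m x)"
      by (simp add: target_def fun_eq_iff)
    have "target K m \<in> borel_measurable PX" "integrable PX (\<lambda>x. (target K m x)\<^sup>2)"
      unfolding target
      by (rule borel_measurable_kernel_mean[OF kern] integrable_kernel_mean_power2[OF kern prob fin])+
    from near[OF this close] obtain \<theta> where "\<theta> \<in> ball \<theta>0 r"
      and min: "is_local_min (\<lambda>\<theta>. \<integral>x. (response \<psi> \<theta> x - target K m x)\<^sup>2 \<partial>PX) \<theta>"
      by blast
    have "is_local_min (cost \<psi> PX K m) \<theta>"
      using min unfolding is_local_min_def
        cost_eq_L2_distance_plus_noise[where K = K and m = m, OF PX \<psi>_cont kern prob fin]
      by simp
    then show "\<exists>\<theta>\<in>U. is_local_min (cost \<psi> PX K m) \<theta>"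
      using \<open>\<theta> \<in> ball \<theta>0 r\<close> \<open>ball \<theta>0 r \<subseteq> U\<close> by blast
  qed
qed

theorem theorem5p1:
  fixes \<psi> :: "real \<Rightarrow> real"
    and PX :: "(real^('i::finite)) measure"
    and Mm :: "'m measure"
    and K :: "'m \<Rightarrow> real^'i \<Rightarrow> real measure"
    and P :: "'w measure"
    and M :: "'w \<Rightarrow> 'm"
    and U :: "('i, 'j::finite) param set"
  assumes analytic: "real_analytic \<psi>"
    and PX_prob: "prob_space PX" and PX_sets: "sets PX = sets borel"
    and supp_compact: "compact (msupport PX)"
    and K_prob: "\<And>m x. m \<in> space Mm \<Longrightarrow> prob_space (K m x)"
    and K_sets: "\<And>m x. m \<in> space Mm \<Longrightarrow> sets (K m x) = sets borel"
    and K_meas: "\<And>B. B \<in> sets borel \<Longrightarrow>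
                   (\<lambda>(m, x). emeasure (K m x) B) \<in> borel_measurable (Mm \<Otimes>\<^sub>M borel)"
    and Y_sq: "\<And>m. m \<in> space Mm \<Longrightarrow>
                 (\<integral>\<^sup>+x. (\<integral>\<^sup>+y. ennreal (y\<^sup>2) \<partial>K m x) \<partial>PX) < \<infinity>"
    and P_prob: "prob_space P"
    and M_meas: "M \<in> measurable P Mm"
    and gauss: "\<And>\<phi>. continuous_on UNIV \<phi> \<Longrightarrow> (\<exists>x\<in>msupport PX. \<phi> x \<noteq> 0) \<Longrightarrow>
                  \<exists>\<mu> \<sigma>. \<sigma> > 0 \<and>
                    distributed P lborel (\<lambda>\<omega>. \<integral>x. \<phi> x * target K (M \<omega>) x \<partial>PX)
                      (normal_density \<mu> \<sigma>)"
    and dense: "\<And>\<phi> \<delta>. continuous_on UNIV \<phi> \<Longrightarrow> \<delta> > 0 \<Longrightarrow>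
                  emeasure P {\<omega> \<in> space P.
                     L2_norm PX (\<lambda>x. target K (M \<omega>) x - \<phi> x) < \<delta>} > 0"
    and U_open: "open U" and U_ne: "U \<noteq> {}"
    and U_sub: "U \<subseteq> EP001 \<psi> (msupport PX)"
  shows "\<exists>A\<in>sets P. emeasure P A > 0 \<and>
           A \<subseteq> {\<omega> \<in> space P. \<exists>\<theta>\<in>U. is_local_min (cost \<psi> PX K (M \<omega>)) \<theta>}"
proof -
  have d\<psi>: "\<And>t. (\<psi> has_real_derivative deriv \<psi> t) (at t)"
    using analytic by (rule real_analytic_has_real_derivative)
  then have \<psi>_cont: "continuous_on UNIV \<psi>"
    by (intro continuous_at_imp_continuous_on ballI DERIV_isCont)
  obtain \<theta>0 where "\<theta>0 \<in> U"
    using U_ne by blast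
  obtain \<epsilon> where "\<epsilon> > 0" and near: "\<And>m. K m \<in> measurable PX (subprob_algebra borel) \<Longrightarrow>
      (\<And>x. prob_space (K m x)) \<Longrightarrow> (\<integral>\<^sup>+x. (\<integral>\<^sup>+y. ennreal (y\<^sup>2) \<partial>K m x) \<partial>PX) < \<infinity> \<Longrightarrow>
      (\<integral>x. (target K m x - response \<psi> \<theta>0 x)\<^sup>2 \<partial>PX) < \<epsilon> \<Longrightarrow>
      \<exists>\<theta>\<in>U. is_local_min (cost \<psi> PX K m) \<theta>"
    using local_min_cost_if_target_near[OF d\<psi> PX_prob PX_sets supp_compact U_open \<open>\<theta>0 \<in> U\<close> U_sub]
    by blast
  define A where "A = {\<omega> \<in> space P. L2_norm PX (\<lambda>x. target K (M \<omega>) x - response \<psi> \<theta>0 x) < sqrt \<epsilon>}"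
  have "emeasure P A > 0"
    unfolding A_def using \<open>\<epsilon> > 0\<close>
    by (intro dense continuous_on_slice_snd[OF continuous_on_response[OF \<psi>_cont]]) simp
  moreover from this have "A \<in> sets P"
    by (intro emeasure_neq_0_sets) simp
  moreover have "A \<subseteq> {\<omega> \<in> space P. \<exists>\<theta>\<in>U. is_local_min (cost \<psi> PX K (M \<omega>)) \<theta>}"
  proof (intro subsetI CollectI conjI)
    fix \<omega> assume "\<omega> \<in> A"
    then have \<omega>: "\<omega> \<in> space P" and close: "(\<integral>x. (target K (M \<omega>) x - response \<psi> \<theta>0 x)\<^sup>2 \<partial>PX) < \<epsilon>"
      by (simp_all add: A_def L2_norm_def)
    show "\<omega> \<in> space P"
      by (rule \<omega>)
    have m: "M \<omega> \<in> space Mm"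
      using M_meas \<omega> by (rule measurable_space)
    show "\<exists>\<theta>\<in>U. is_local_min (cost \<psi> PX K (M \<omega>)) \<theta>"
      by (rule near[OF measurable_kernel_section[OF K_meas m prob_space_imp_subprob_space[OF K_prob[OF m]]
            K_sets[OF m] PX_sets] K_prob[OF m] Y_sq[OF m] close])
  qed
  ultimately show ?thesis
    by blast
qed

end
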